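(* Let $n,m\ge 1$ and let $u_1,\ldots,u_r$ be left normed commutators $u_j=[t_1,t_2,t_{j_3},\ldots,t_{j_k}]$ ($j_s\in\{1,2\}$) with $\deg_{t_1}u_j=n$ and $\deg_{t_2}u_j=m$ for all $j$. Let $\alpha_1,\ldots,\alpha_r\in K[X]$ and suppose $f(C_1,C_2)=\sum_j\alpha_ju_j(C_1,C_2)\in F$. Then the following are equivalent: (1) $f(C_1,C_2)$ is strongly central in $F$; (2) $f(C_1,C_2)$ is central in $F$; (3) $\alpha_1+\cdots+\alpha_r=0$ in $K[X;Y]$.
   Context: $K$ is an infinite field of characteristic different from 2. Let $X=\{x_1,x_2,x_1',x_2'\}$ and $Y=\{y_1,y_2,y_1',y_2'\}$, and let $K[X;Y]\cong K[X]\otimes_K E(Y)$ be the free supercommutative algebra: the $x$'s are even commuting variables, the $y$'s are odd pairwise anticommuting variables, and $E(Y)$ is the Grassmann algebra on the vector space with basis $Y$; $K[X]$ is the polynomial subalgebra, whose elements act on matrices as scalars. Put $C_1=\begin{pmatrix} x_1&y_1\\ y_1'&x_1'\end{pmatrix}$, $C_2=\begin{pmatrix} x_2&y_2\\ y_2'&x_2'\end{pmatrix}$, and let $F=K[C_1,C_2]$ be the unital $K$-subalgebra of $M_2(K[X;Y])$ generated by $C_1,C_2$. Commutators are $[a,b]=ab-ba$, left normed: $[a_1,\ldots,a_k]=[[a_1,\ldots,a_{k-1}],a_k]$; $t_1,t_2$ are free noncommuting variables. An element $a\in F$ is strongly central if $a$ is central in $F$ and $ab$ is central in $F$ for every $b\in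 F$. *)

theory Defs
  imports "HOL-Computational_Algebra.Polynomial"
begin

text \<open>K[X] = K[x1,x2,x1',x2'] as nested univariate polynomials:
  x1 is the outermost variable, then x2, x1', x2'.\<close>
type_synonym 'k kx = "'k poly poly poly poly"

definition vx1 :: "'k::field kx" where "vx1 = monom 1 1"
definition vx2 :: "'k::field kx" where "vx2 = [:monom 1 1:]"
definition vx1' :: "'k::field kx" where "vx1' = [:[:monom 1 1:]:]"
definition vx2' :: "'k::field kx" where "vx2' = [:[:[:monom 1 1:]:]:]"

definition constK :: "'k::field \<Rightarrow> 'k kx" where "constK c = [:[:[:[:c:]:]:]:]"

text \<open>K[X;Y] = K[X] \<otimes> E(Y): an element is the family of coefficients (in K[X]) of the
  Grassmann monomials y_S, S a set of odd-variable indices (y1=0, y2=1, y1'=2, y2'=3),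
  y_S being the product of the y_i, i in S, in increasing order.\<close>
type_synonym 'k sc = "nat set \<Rightarrow> 'k kx"

definition gsign :: "nat set \<Rightarrow> nat set \<Rightarrow> 'k::field kx" where
  "gsign A B = (-1) ^ card {(i, j). i \<in> A \<and> j \<in> B \<and> j < i}"

definition gmul :: "'k::field sc \<Rightarrow> 'k sc \<Rightarrow> 'k sc" where
  "gmul a b = (\<lambda>S. \<Sum>T\<in>Pow S. gsign T (S - T) * a T * b (S - T))"

definition gadd :: "'k::field sc \<Rightarrow> 'k sc \<Rightarrow> 'k sc" where
  "gadd a b = (\<lambda>S. a S + b S)"

definition gsub :: "'k::field sc \<Rightarrow> 'k sc \<Rightarrow> 'k sc" where
  "gsub a b = (\<lambda>S. a S - b S)"

definition gzero :: "'k::field sc" where "gzero = (\<lambda>S. 0)"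

definition gev :: "'k::field kx \<Rightarrow> 'k sc" where
  "gev r = (\<lambda>S. if S = {} then r else 0)"

definition gone :: "'k::field sc" where "gone = gev 1"

definition gy :: "nat \<Rightarrow> 'k::field sc" where
  "gy i = (\<lambda>S. if S = {i} then 1 else 0)"

datatype 'a mat2 = M2 'a 'a 'a 'a

fun mmul :: "'k::field sc mat2 \<Rightarrow> 'k sc mat2 \<Rightarrow> 'k sc mat2" where
  "mmul (M2 a b c d) (M2 e f g h) =
     M2 (gadd (gmul a e) (gmul b g)) (gadd (gmul a f) (gmul b h))
        (gadd (gmul c e) (gmul d g)) (gadd (gmul c f) (gmul d h))"

fun madd :: "'k::field sc mat2 \<Rightarrow> 'k sc mat2 \<Rightarrow> 'k sc mat2" where
  "madd (M2 a b c d) (M2 e f g h) = M2 (gadd a e) (gadd b f) (gadd c g) (gadd d h)"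

fun msub :: "'k::field sc mat2 \<Rightarrow> 'k sc mat2 \<Rightarrow> 'k sc mat2" where
  "msub (M2 a b c d) (M2 e f g h) = M2 (gsub a e) (gsub b f) (gsub c g) (gsub d h)"

fun mscal :: "'k::field sc \<Rightarrow> 'k sc mat2 \<Rightarrow> 'k sc mat2" where
  "mscal s (M2 a b c d) = M2 (gmul s a) (gmul s b) (gmul s c) (gmul s d)"

definition mzero :: "'k::field sc mat2" where "mzero = M2 gzero gzero gzero gzero"
definition mone :: "'k::field sc mat2" where "mone = M2 gone gzero gzero gone"

definition mcomm :: "'k::field sc mat2 \<Rightarrow> 'k sc mat2 \<Rightarrow> 'k sc mat2" where
  "mcomm a b = msub (mmul a b) (mmul b a)"

definition C1 :: "'k::field sc mat2" where
  "C1 = M2 (gev vx1) (gy 0) (gy 2) (gev vx1')"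
definition C2 :: "'k::field sc mat2" where
  "C2 = M2 (gev vx2) (gy 1) (gy 3) (gev vx2')"

inductive_set Falg :: "'k::field sc mat2 set" where
  one: "mone \<in> Falg"
| gen1: "C1 \<in> Falg"
| gen2: "C2 \<in> Falg"
| add: "a \<in> Falg \<Longrightarrow> b \<in> Falg \<Longrightarrow> madd a b \<in> Falg"
| mul: "a \<in> Falg \<Longrightarrow> b \<in> Falg \<Longrightarrow> mmul a b \<in> Falg"
| smul: "a \<in> Falg \<Longrightarrow> mscal (gev (constK c)) a \<in> Falg"

definition central_in_F :: "'k::field sc mat2 \<Rightarrow> bool" where
  "central_in_F a \<longleftrightarrow> a \<in> Falg \<and> (\<forall>b\<in>Falg. mmul a b = mmul b a)"

definition strongly_central :: "'k::field sc mat2 \<Rightarrow> bool" where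
  "strongly_central a \<longleftrightarrow> central_in_F a \<and> (\<forall>b\<in>Falg. central_in_F (mmul a b))"

definition Cgen :: "nat \<Rightarrow> 'k::field sc mat2" where
  "Cgen j = (if j = 1 then C1 else C2)"

text \<open>the left normed commutator [t1,t2,t_{j3},...,t_{jk}] evaluated at (C1,C2),
  where js = [j3,...,jk]\<close>
definition lcomm :: "nat list \<Rightarrow> 'k::field sc mat2" where
  "lcomm js = foldl (\<lambda>acc j. mcomm acc (Cgen j)) (mcomm C1 C2) js"

fun fcomb :: "nat \<Rightarrow> (nat \<Rightarrow> 'k::field kx) \<Rightarrow> (nat \<Rightarrow> nat list) \<Rightarrow> 'k sc mat2" where
  "fcomb 0 alpha js = mzero"
| "fcomb (Suc k) alpha js = madd (fcomb k alpha js) (mscal (gev (alpha k)) (lcomm (js k)))"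

end

theory Submission
  imports Defs
begin

(*
  Write d_i = x_i - x_i'. The commutator [C_1, C_2] has the shape (s, a; b, s) with s even and
  a = d_1 y_2 - d_2 y_1, b = d_2 y_1' - d_1 y_2' odd, and commuting a left normed commutator of
  this shape with C_j multiplies a by -d_j and b by d_j. Hence a commutator u of multidegree
  (n, m) equals (z, +-d^w a; d^w b, z), d^w = d_1^(n-1) d_2^(m-1), where only the diagonal z
  depends on the order of the letters; two such diagonals differ by a multiple of ab. An even
  element w with w s = w a = w b = 0, such as ab, makes w I commute with F and kill [C_1, C_2],
  hence every commutator of F (commutation is a derivation): w I is strongly central.
  So f = (alpha_1 + ... + alpha_r) u + w I, and f commutes with C_1 only if
  (alpha_1 + ... + alpha_r) [u, C_1] = 0, whose upper right entry is
  +-(alpha_1 + ... + alpha_r) d_1 d^w a; as K[X] is a domain, the sum of the alpha_j vanishes.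
*)

section \<open>The supercommutative algebra \<open>K[X;Y]\<close>\<close>

definition inversions :: "nat set \<Rightarrow> nat set \<Rightarrow> nat" where
  "inversions A B = card {(i, j). i \<in> A \<and> j \<in> B \<and> j < i}"

lemma gsign_eq_inversions: "gsign A B = (-1) ^ inversions A B"
  by (simp add: gsign_def inversions_def)

lemma inversions_Un_left:
  assumes "finite A" "finite B" "finite C" "A \<inter> B = {}"
  shows "inversions (A \<union> B) C = inversions A C + inversions B C"
proof -
  have "{(i, j). i \<in> A \<union> B \<and> j \<in> C \<and> j < i} =
        {(i, j). i \<in> A \<and> j \<in> C \<and> j < i} \<union> {(i, j). i \<in> B \<and> j \<in> C \<and> j < i}"
    by auto
  moreover have "finite {(i, j). i \<in> A \<and> j \<in> C \<and> j < i}" "finite {(i, j). i \<in> B \<and> j \<in> C \<and> j < i}"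
    by (rule finite_subset[of _ "A \<times> C"] finite_subset[of _ "B \<times> C"], use assms in auto)+
  ultimately show ?thesis
    unfolding inversions_def by (subst card_Un_disjoint[symmetric]) (use assms in auto)
qed

lemma inversions_Un_right:
  assumes "finite A" "finite B" "finite C" "B \<inter> C = {}"
  shows "inversions A (B \<union> C) = inversions A B + inversions A C"
proof -
  have "{(i, j). i \<in> A \<and> j \<in> B \<union> C \<and> j < i} =
        {(i, j). i \<in> A \<and> j \<in> B \<and> j < i} \<union> {(i, j). i \<in> A \<and> j \<in> C \<and> j < i}"
    by auto
  moreover have "finite {(i, j). i \<in> A \<and> j \<in> B \<and> j < i}" "finite {(i, j). i \<in> A \<and> j \<in> C \<and> j < i}"
    by (rule finite_subset[of _ "A \<times> B"] finite_subset[of _ "A \<times> C"], use assms in auto)+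
  ultimately show ?thesis
    unfolding inversions_def by (subst card_Un_disjoint[symmetric]) (use assms in auto)
qed

lemma gsign_split:
  assumes "finite S" "U \<subseteq> T" "T \<subseteq> S"
  shows "gsign T (S - T) * gsign U (T - U) = (gsign U (S - U) * gsign (T - U) (S - T) :: 'k::field kx)"
proof -
  have fin: "finite U" "finite (T - U)" "finite (S - T)"
    using assms by (auto intro: finite_subset)
  have "inversions (U \<union> (T - U)) (S - T) = inversions U (S - T) + inversions (T - U) (S - T)"
    by (rule inversions_Un_left) (use fin in auto)
  moreover have "inversions U ((T - U) \<union> (S - T)) = inversions U (T - U) + inversions U (S - T)"
    by (rule inversions_Un_right) (use fin in auto)
  moreover have "U \<union> (T - U) = T" "(T - U) \<union> (S - T) = S - U"
    using assms by auto
  ultimately show ?thesis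
    by (simp add: gsign_eq_inversions power_add)
qed

lemma gmul_assoc: "gmul (gmul a b) c = gmul a (gmul b c)"
proof
  fix S :: "nat set"
  show "gmul (gmul a b) c S = gmul a (gmul b c) S"
  proof (cases "finite S")
    case False
    then show ?thesis by (simp add: gmul_def)
  next
    case fin: True
    have "gmul (gmul a b) c S = (\<Sum>(T, U)\<in>Sigma (Pow S) Pow.
        gsign T (S - T) * (gsign U (T - U) * a U * b (T - U)) * c (S - T))"
      unfolding gmul_def
      by (subst sum.Sigma[symmetric]) (auto simp: sum_distrib_left sum_distrib_right fin intro: finite_subset)
    also have "\<dots> = (\<Sum>(U, V)\<in>Sigma (Pow S) (\<lambda>U. Pow (S - U)).
        gsign U (S - U) * a U * (gsign V (S - U - V) * b V * c (S - U - V)))"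
    proof (rule sum.reindex_bij_witness[where i = "\<lambda>(U, V). (U \<union> V, U)" and j = "\<lambda>(T, U). (U, T - U)"])
      fix p assume "p \<in> Sigma (Pow S) Pow"
      then obtain T U where p: "p = (T, U)" "U \<subseteq> T" "T \<subseteq> S" by auto
      have diff_eq: "S - U - (T - U) = S - T"
        using p by auto
      have "gsign T (S - T) * (gsign U (T - U) * a U * b (T - U)) * c (S - T)
          = (gsign T (S - T) * gsign U (T - U)) * (a U * b (T - U) * c (S - T))"
        by (simp only: mult_ac)
      also have "\<dots> = (gsign U (S - U) * gsign (T - U) (S - T)) * (a U * b (T - U) * c (S - T))"
        by (simp only: gsign_split[OF fin p(2,3)])
      also have "\<dots> = gsign U (S - U) * a U * (gsign (T - U) (S - U - (T - U)) * b (T - U) * c (S - U - (T - U)))"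
        unfolding diff_eq by (simp only: mult_ac)
      finally show
        "(case (case p of (T, U) \<Rightarrow> (U, T - U)) of (U, V) \<Rightarrow>
            gsign U (S - U) * a U * (gsign V (S - U - V) * b V * c (S - U - V))) =
         (case p of (T, U) \<Rightarrow> gsign T (S - T) * (gsign U (T - U) * a U * b (T - U)) * c (S - T))"
        unfolding p prod.case by (rule sym)
    qed auto
    also have "\<dots> = gmul a (gmul b c) S"
      unfolding gmul_def
      by (subst sum.Sigma[symmetric]) (auto simp: sum_distrib_left sum_distrib_right fin intro: finite_subset)
    finally show ?thesis .
  qed
qed

lemma gsign_empty [simp]: "gsign {} S = 1" "gsign S {} = 1"
  by (simp_all add: gsign_def)

lemma gmul_infinite: "infinite S \<Longrightarrow> gmul a b S = 0"
  by (simp add: gmul_def)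

lemma gmul_gadd_left: "gmul (gadd a b) c = gadd (gmul a c) (gmul b c)"
  by (rule ext) (simp add: gmul_def gadd_def algebra_simps sum.distrib)

lemma gmul_gadd_right: "gmul a (gadd b c) = gadd (gmul a b) (gmul a c)"
  by (rule ext) (simp add: gmul_def gadd_def algebra_simps sum.distrib)

lemma gmul_gev_left: "finite S \<Longrightarrow> gmul (gev r) a S = r * a S"
proof -
  assume "finite S"
  then have "gmul (gev r) a S = (\<Sum>T\<in>Pow S. if T = {} then r * a S else 0)"
    unfolding gmul_def gev_def by (intro sum.cong) auto
  also have "\<dots> = r * a S"
    using \<open>finite S\<close> by (simp add: sum.delta)
  finally show ?thesis .
qed

lemma gmul_gev_right: "finite S \<Longrightarrow> gmul a (gev r) S = a S * r"
proof -
  assume "finite S"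
  then have "gmul a (gev r) S = (\<Sum>T\<in>Pow S. if T = S then a S * r else 0)"
    unfolding gmul_def gev_def by (intro sum.cong) auto
  also have "\<dots> = a S * r"
    using \<open>finite S\<close> by (simp add: sum.delta')
  finally show ?thesis .
qed

text \<open>The coefficients at infinite index sets carry no meaning in \<open>'k sc\<close>; requiring
  them to vanish makes \<open>gone\<close> a two-sided unit.\<close>
typedef (overloaded) 'k kxy = "{a :: 'k::field sc. \<forall>S. infinite S \<longrightarrow> a S = 0}"
  by (rule exI[of _ "\<lambda>S. 0"]) auto

setup_lifting type_definition_kxy

lemma gmul_gone_left:
  assumes "\<forall>S. infinite S \<longrightarrow> a S = 0"
  shows "gmul gone a = a"
proof
  fix S
  show "gmul gone a S = a S"
    using assms by (cases "finite S") (auto simp: gone_def gmul_gev_left gmul_infinite)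
qed

lemma gmul_gone_right:
  assumes "\<forall>S. infinite S \<longrightarrow> a S = 0"
  shows "gmul a gone = a"
proof
  fix S
  show "gmul a gone S = a S"
    using assms by (cases "finite S") (auto simp: gone_def gmul_gev_right gmul_infinite)
qed

instantiation kxy :: (field) ring_1
begin
lift_definition zero_kxy :: "'a kxy" is gzero by (simp add: gzero_def)
lift_definition one_kxy :: "'a kxy" is gone by (auto simp: gone_def gev_def)
lift_definition plus_kxy :: "'a kxy \<Rightarrow> 'a kxy \<Rightarrow> 'a kxy" is gadd by (simp add: gadd_def)
lift_definition minus_kxy :: "'a kxy \<Rightarrow> 'a kxy \<Rightarrow> 'a kxy" is gsub by (simp add: gsub_def)
lift_definition uminus_kxy :: "'a kxy \<Rightarrow> 'a kxy" is "\<lambda>a S. - a S" by simp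
lift_definition times_kxy :: "'a kxy \<Rightarrow> 'a kxy \<Rightarrow> 'a kxy" is gmul by (simp add: gmul_infinite)
instance
proof
  fix a b c :: "'a kxy"
  show "a * b * c = a * (b * c)" by transfer (rule gmul_assoc)
  show "(a + b) * c = a * c + b * c" by transfer (rule gmul_gadd_left)
  show "a * (b + c) = a * b + a * c" by transfer (rule gmul_gadd_right)
  show "a + b + c = a + (b + c)" by transfer (simp add: gadd_def add.assoc)
  show "a + b = b + a" by transfer (simp add: gadd_def add.commute)
  show "0 + a = a" by transfer (simp add: gadd_def gzero_def)
  show "- a + a = 0" by transfer (simp add: gadd_def gzero_def)
  show "a - b = a + - b" by transfer (simp add: gadd_def gsub_def)
  show "1 * a = a" by transfer (rule gmul_gone_left)
  show "a * 1 = a" by transfer (rule gmul_gone_right)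
  show "(0::'a kxy) \<noteq> 1" by transfer (auto simp: gone_def gev_def gzero_def fun_eq_iff)
qed
end

lift_definition of_kx :: "'k::field kx \<Rightarrow> 'k kxy" is gev by (auto simp: gev_def)
lift_definition ygen :: "nat \<Rightarrow> 'k::field kxy" is gy by (auto simp: gy_def)

lemma gmul_gev_gev: "gmul (gev p) (gev q) = gev (p * q)"
proof
  fix S :: "nat set"
  show "gmul (gev p) (gev q) S = gev (p * q) S"
  proof (cases "finite S")
    case True
    then show ?thesis by (simp add: gmul_gev_left) (simp add: gev_def)
  next
    case False
    then show ?thesis by (auto simp: gmul_infinite gev_def)
  qed
qed

lemma of_kx_add: "of_kx (p + q) = of_kx p + of_kx q"
  by transfer (simp add: gev_def gadd_def fun_eq_iff)

lemma of_kx_mult: "of_kx (p * q) = of_kx p * of_kx q"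
  by transfer (simp add: gmul_gev_gev)

lemma of_kx_diff: "of_kx (p - q) = of_kx p - of_kx q"
  by transfer (simp add: gev_def gsub_def fun_eq_iff)

lemma of_kx_1: "of_kx 1 = 1"
  by transfer (simp add: gone_def)

lemma of_kx_0: "of_kx 0 = 0"
  by transfer (simp add: gev_def gzero_def fun_eq_iff)

lemma gmul_gev_commute: "\<forall>S. infinite S \<longrightarrow> a S = 0 \<Longrightarrow> gmul (gev p) a = gmul a (gev p)"
proof
  fix S assume "\<forall>S. infinite S \<longrightarrow> a S = 0"
  then show "gmul (gev p) a S = gmul a (gev p) S"
    by (cases "finite S") (simp_all add: gmul_gev_left gmul_gev_right gmul_infinite mult.commute)
qed

lemma of_kx_commute: "of_kx p * a = a * of_kx p"
  by transfer (rule gmul_gev_commute)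

lemma gmul_gy_gy:
  "gmul (gy i) (gy j) = (\<lambda>S. if i \<noteq> j \<and> S = {i, j} then if j < i then -1 else 1 else 0)"
proof
  fix S
  show "gmul (gy i) (gy j) S = (if i \<noteq> j \<and> S = {i, j} then if j < i then -1 else 1 else 0)"
  proof (cases "finite S")
    case False
    then show ?thesis by (auto simp: gmul_infinite)
  next
    case True
    have "{(a, b). a \<in> {i} \<and> b \<in> {j} \<and> b < a} = (if j < i then {(i, j)} else {})"
      by auto
    then have sign: "gsign {i} {j} = (if j < i then -1 else 1)"
      unfolding gsign_def by simp
    have "gmul (gy i) (gy j) S = (\<Sum>T\<in>Pow S. if T = {i} then gsign {i} (S - {i}) * gy j (S - {i}) else 0)"
      unfolding gmul_def gy_def by (intro sum.cong) auto
    also have "\<dots> = (if i \<noteq> j \<and> S = {i, j} then gsign {i} {j} else 0)"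
      using True by (auto simp: sum.delta gy_def)
    also have "\<dots> = (if i \<noteq> j \<and> S = {i, j} then if j < i then -1 else 1 else 0)"
      by (simp only: sign)
    finally show ?thesis .
  qed
qed

lemma ygen_anticommute: "ygen i * ygen j = - (ygen j * ygen i)"
  by transfer (auto simp: gmul_gy_gy insert_commute fun_eq_iff)

lemma ygen_square: "ygen i * ygen i = 0"
  by transfer (simp add: gmul_gy_gy gzero_def)

lemma gmul_gev_gy: "gmul (gev c) (gy i) = (\<lambda>S. if S = {i} then c else 0)"
proof
  fix S :: "nat set"
  show "gmul (gev c) (gy i) S = (if S = {i} then c else 0)"
    by (cases "finite S") (auto simp: gmul_gev_left gmul_infinite gy_def)
qed

lemma Rep_of_kx_mult_ygen: "Rep_kxy (of_kx c * ygen i) = (\<lambda>S. if S = {i} then c else 0)"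
  by transfer (rule gmul_gev_gy)

lemma ygen_of_kx_commute: "ygen i * of_kx p = of_kx p * ygen i"
  by (rule of_kx_commute[symmetric])

lemma ygen_swap: "j < i \<Longrightarrow> ygen i * ygen j = - (ygen j * ygen i)"
  by (rule ygen_anticommute)

lemma ygen_swap_left: "j < i \<Longrightarrow> ygen i * (ygen j * t) = - (ygen j * (ygen i * t))"
  by (simp add: mult.assoc[symmetric] ygen_swap)

lemma ygen_square_left: "ygen i * (ygen i * t) = 0"
  by (simp add: mult.assoc[symmetric] ygen_square)

lemma ygen_of_kx_left_commute: "ygen i * (of_kx p * t) = of_kx p * (ygen i * t)"
  by (metis mult.assoc of_kx_commute)

lemma of_kx_mult_left: "of_kx p * (of_kx q * t) = of_kx (p * q) * t"
  by (simp add: of_kx_mult mult.assoc)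

text \<open>Rewriting to a normal form: a coefficient \<open>of_kx p\<close> in front of a right-nested
  product of generators with increasing indices. \<open>mult_ac\<close> must stay out of this set, as
  its commutativity rules loop against the swap rules.\<close>
lemmas kxy_normalize = ring_distribs mult.assoc ygen_of_kx_commute ygen_of_kx_left_commute
  of_kx_mult[symmetric] of_kx_mult_left ygen_swap ygen_swap_left ygen_square ygen_square_left

definition y_comm :: "'k::field kxy \<Rightarrow> bool" where
  "y_comm a \<longleftrightarrow> (\<forall>k. a * ygen k = ygen k * a)"

definition y_anticomm :: "'k::field kxy \<Rightarrow> bool" where
  "y_anticomm a \<longleftrightarrow> (\<forall>k. a * ygen k = - (ygen k * a))"

lemma y_anticomm_ygen: "y_anticomm (ygen i)"
  unfolding y_anticomm_def by (rule allI, rule ygen_anticommute)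

lemma y_anticomm_diff: "y_anticomm a \<Longrightarrow> y_anticomm b \<Longrightarrow> y_anticomm (a - b)"
  by (simp add: y_anticomm_def algebra_simps)

lemma y_anticomm_of_kx_mult: "y_anticomm a \<Longrightarrow> y_anticomm (of_kx c * a)"
  by (simp add: y_anticomm_def mult.assoc ygen_of_kx_left_commute)

lemma y_comm_0: "y_comm 0"
  by (simp add: y_comm_def)

lemma y_comm_add: "y_comm a \<Longrightarrow> y_comm b \<Longrightarrow> y_comm (a + b)"
  by (simp add: y_comm_def algebra_simps)

lemma y_comm_uminus: "y_comm a \<Longrightarrow> y_comm (- a)"
  by (simp add: y_comm_def)

lemma y_comm_of_kx_mult: "y_comm a \<Longrightarrow> y_comm (of_kx c * a)"
  by (simp add: y_comm_def mult.assoc ygen_of_kx_left_commute)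

lemma y_comm_mult_y_anticomm:
  assumes "y_anticomm a" "y_anticomm b"
  shows "y_comm (a * b)"
  unfolding y_comm_def
proof
  fix k
  have "a * b * ygen k = a * (b * ygen k)"
    by (simp only: mult.assoc)
  also have "\<dots> = - (a * ygen k * b)"
    using assms(2) by (simp add: y_anticomm_def mult.assoc)
  also have "\<dots> = ygen k * a * b"
    using assms(1) by (simp add: y_anticomm_def)
  also have "\<dots> = ygen k * (a * b)"
    by (simp only: mult.assoc)
  finally show "a * b * ygen k = ygen k * (a * b)" .
qed

inductive_set ylinear :: "'k::field kxy set" where
  of_kx_mult_ygen: "of_kx c * ygen i \<in> ylinear"
| add: "a \<in> ylinear \<Longrightarrow> b \<in> ylinear \<Longrightarrow> a + b \<in> ylinear"
| diff: "a \<in> ylinear \<Longrightarrow> b \<in> ylinear \<Longrightarrow> a - b \<in> ylinear"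

lemma ylinear_anticommute_of_kx_mult_ygen:
  "b \<in> ylinear \<Longrightarrow> of_kx c * ygen i * b = - (b * (of_kx c * ygen i))"
proof (induction rule: ylinear.induct)
  case (of_kx_mult_ygen e j)
  show ?case by (simp add: kxy_normalize ygen_anticommute[of j i]) (simp add: mult.commute)
qed (simp_all add: algebra_simps)

lemma ylinear_anticommute: "a \<in> ylinear \<Longrightarrow> b \<in> ylinear \<Longrightarrow> a * b = - (b * a)"
proof (induction rule: ylinear.induct)
  case (of_kx_mult_ygen c i)
  then show ?case by (rule ylinear_anticommute_of_kx_mult_ygen)
qed (simp_all add: algebra_simps)

lemma ylinear_square: "a \<in> ylinear \<Longrightarrow> a * a = 0"
proof (induction rule: ylinear.induct)
  case (of_kx_mult_ygen c i)
  then show ?case by (simp add: kxy_normalize)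
next
  case (add a b)
  then show ?case using ylinear_anticommute[of a b] by (simp add: algebra_simps)
next
  case (diff a b)
  then show ?case using ylinear_anticommute[of a b] by (simp add: algebra_simps)
qed

section \<open>Matrices over \<open>K[X;Y]\<close> and the algebra \<open>F\<close>\<close>

instantiation mat2 :: (ring_1) ring_1
begin
definition "zero_mat2 = M2 0 0 0 0"
definition "one_mat2 = M2 1 0 0 1"
definition "plus_mat2 A B = (case A of M2 a b c d \<Rightarrow> case B of M2 e f g h \<Rightarrow>
   M2 (a + e) (b + f) (c + g) (d + h))"
definition "minus_mat2 A B = (case A of M2 a b c d \<Rightarrow> case B of M2 e f g h \<Rightarrow>
   M2 (a - e) (b - f) (c - g) (d - h))"
definition "uminus_mat2 A = (case A of M2 a b c d \<Rightarrow> M2 (- a) (- b) (- c) (- d))"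
definition "times_mat2 A B = (case A of M2 a b c d \<Rightarrow> case B of M2 e f g h \<Rightarrow>
   M2 (a * e + b * g) (a * f + b * h) (c * e + d * g) (c * f + d * h))"
instance
proof
  fix A B C :: "'a mat2"
  show "A * B * C = A * (B * C)"
    by (cases A; cases B; cases C) (simp add: times_mat2_def algebra_simps)
  show "(A + B) * C = A * C + B * C"
    by (cases A; cases B; cases C) (simp add: times_mat2_def plus_mat2_def algebra_simps)
  show "A * (B + C) = A * B + A * C"
    by (cases A; cases B; cases C) (simp add: times_mat2_def plus_mat2_def algebra_simps)
  show "A + B + C = A + (B + C)"
    by (cases A; cases B; cases C) (simp add: plus_mat2_def algebra_simps)
  show "A + B = B + A"
    by (cases A; cases B) (simp add: plus_mat2_def algebra_simps)
  show "0 + A = A"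
    by (cases A) (simp add: plus_mat2_def zero_mat2_def)
  show "- A + A = 0"
    by (cases A) (simp add: plus_mat2_def zero_mat2_def uminus_mat2_def)
  show "A - B = A + - B"
    by (cases A; cases B) (simp add: plus_mat2_def minus_mat2_def uminus_mat2_def)
  show "1 * A = A"
    by (cases A) (simp add: times_mat2_def one_mat2_def)
  show "A * 1 = A"
    by (cases A) (simp add: times_mat2_def one_mat2_def)
  show "(0::'a mat2) \<noteq> 1"
    by (simp add: zero_mat2_def one_mat2_def)
qed
end

lemma mat2_arith [simp]:
  "M2 a b c d + M2 e f g h = M2 (a + e) (b + f) (c + g) (d + h)"
  "M2 a b c d - M2 e f g h = M2 (a - e) (b - f) (c - g) (d - h)"
  "- M2 a b c d = M2 (- a) (- b) (- c) (- d)"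
  "M2 a b c d * M2 e f g h = M2 (a * e + b * g) (a * f + b * h) (c * e + d * g) (c * f + d * h)"
  by (simp_all add: plus_mat2_def minus_mat2_def uminus_mat2_def times_mat2_def)

definition scalar_mat2 :: "'a::ring_1 \<Rightarrow> 'a mat2" where
  "scalar_mat2 x = M2 x 0 0 x"

lemma scalar_mat2_0: "scalar_mat2 0 = 0"
  by (simp add: scalar_mat2_def zero_mat2_def)

lemma scalar_mat2_add: "scalar_mat2 (x + y) = scalar_mat2 x + scalar_mat2 y"
  by (simp add: scalar_mat2_def)

lemma scalar_mat2_mult: "scalar_mat2 (x * y) = scalar_mat2 x * scalar_mat2 y"
  by (simp add: scalar_mat2_def)

lemma scalar_mat2_commute:
  "(\<And>e. e \<in> set_mat2 M \<Longrightarrow> x * e = e * x) \<Longrightarrow> scalar_mat2 x * M = M * scalar_mat2 x"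
  by (cases M) (simp add: scalar_mat2_def)

lemma scalar_mat2_of_kx_commute: "scalar_mat2 (of_kx c) * M = M * scalar_mat2 (of_kx c)"
  by (rule scalar_mat2_commute) (rule of_kx_commute)

definition xgen :: "nat \<Rightarrow> 'k::field kx" where
  "xgen j = (if j = 1 then vx1 else vx2)"

definition xgen' :: "nat \<Rightarrow> 'k::field kx" where
  "xgen' j = (if j = 1 then vx1' else vx2')"

definition yup :: "nat \<Rightarrow> 'k::field kxy" where
  "yup j = ygen (if j = 1 then 0 else 1)"

definition ylow :: "nat \<Rightarrow> 'k::field kxy" where
  "ylow j = ygen (if j = 1 then 2 else 3)"

definition Cgen_kxy :: "nat \<Rightarrow> 'k::field kxy mat2" where
  "Cgen_kxy j = M2 (of_kx (xgen j)) (yup j) (ylow j) (of_kx (xgen' j))"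

inductive_set F_kxy :: "'k::field kxy mat2 set" where
  one: "1 \<in> F_kxy"
| gen: "j \<in> {1, 2} \<Longrightarrow> Cgen_kxy j \<in> F_kxy"
| add: "a \<in> F_kxy \<Longrightarrow> b \<in> F_kxy \<Longrightarrow> a + b \<in> F_kxy"
| mult: "a \<in> F_kxy \<Longrightarrow> b \<in> F_kxy \<Longrightarrow> a * b \<in> F_kxy"
| smult: "a \<in> F_kxy \<Longrightarrow> scalar_mat2 (of_kx (constK c)) * a \<in> F_kxy"

definition central_kxy :: "'k::field kxy mat2 \<Rightarrow> bool" where
  "central_kxy a \<longleftrightarrow> a \<in> F_kxy \<and> (\<forall>b\<in>F_kxy. a * b = b * a)"

definition lcomm_kxy :: "nat list \<Rightarrow> 'k::field kxy mat2" where
  "lcomm_kxy js = foldl (\<lambda>acc j. acc * Cgen_kxy j - Cgen_kxy j * acc)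
     (Cgen_kxy 1 * Cgen_kxy 2 - Cgen_kxy 2 * Cgen_kxy 1) js"

primrec fcomb_kxy :: "nat \<Rightarrow> (nat \<Rightarrow> 'k::field kx) \<Rightarrow> (nat \<Rightarrow> nat list) \<Rightarrow> 'k kxy mat2" where
  "fcomb_kxy 0 alpha js = 0"
| "fcomb_kxy (Suc k) alpha js =
     fcomb_kxy k alpha js + scalar_mat2 (of_kx (alpha k)) * lcomm_kxy (js k)"

abbreviation sc_mat :: "'k::field kxy mat2 \<Rightarrow> 'k sc mat2" where
  "sc_mat \<equiv> map_mat2 Rep_kxy"

lemma sc_mat_inject: "sc_mat A = sc_mat B \<longleftrightarrow> A = B"
  by (cases A; cases B) (simp add: Rep_kxy_inject)

lemma sc_mat_add: "madd (sc_mat A) (sc_mat B) = sc_mat (A + B)"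
  by (cases A; cases B) (simp add: plus_kxy.rep_eq)

lemma sc_mat_diff: "msub (sc_mat A) (sc_mat B) = sc_mat (A - B)"
  by (cases A; cases B) (simp add: minus_kxy.rep_eq)

lemma sc_mat_mult: "mmul (sc_mat A) (sc_mat B) = sc_mat (A * B)"
  by (cases A; cases B) (simp add: times_kxy.rep_eq plus_kxy.rep_eq)

lemma sc_mat_scalar: "mscal (gev c) (sc_mat A) = sc_mat (scalar_mat2 (of_kx c) * A)"
  by (cases A) (simp add: scalar_mat2_def times_kxy.rep_eq of_kx.rep_eq)

lemma sc_mat_0: "sc_mat 0 = mzero"
  by (simp add: mzero_def zero_mat2_def zero_kxy.rep_eq)

lemma sc_mat_1: "sc_mat 1 = mone"
  by (simp add: mone_def one_mat2_def zero_kxy.rep_eq one_kxy.rep_eq)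

lemma sc_mat_Cgen: "sc_mat (Cgen_kxy j) = Cgen j"
  by (simp add: Cgen_kxy_def Cgen_def C1_def C2_def xgen_def xgen'_def yup_def ylow_def
      of_kx.rep_eq ygen.rep_eq)

lemma Falg_sc_mat: "a \<in> Falg \<Longrightarrow> \<exists>b\<in>F_kxy. a = sc_mat b"
proof (induction rule: Falg.induct)
  case one
  show ?case using F_kxy.one sc_mat_1 by metis
next
  case gen1
  show ?case by (rule bexI[of _ "Cgen_kxy 1"]) (simp_all add: sc_mat_Cgen Cgen_def F_kxy.gen)
next
  case gen2
  show ?case by (rule bexI[of _ "Cgen_kxy 2"]) (simp_all add: sc_mat_Cgen Cgen_def F_kxy.gen)
next
  case (add a b)
  then show ?case using F_kxy.add sc_mat_add by metis
next
  case (mul a b)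
  then show ?case using F_kxy.mult sc_mat_mult by metis
next
  case (smul a c)
  then show ?case using F_kxy.smult sc_mat_scalar by metis
qed

lemma sc_mat_F_kxy: "b \<in> F_kxy \<Longrightarrow> sc_mat b \<in> Falg"
proof (induction rule: F_kxy.induct)
  case (gen j)
  then show ?case using Falg.gen1 Falg.gen2 by (auto simp: sc_mat_Cgen Cgen_def)
next
  case (smult a c)
  then show ?case using Falg.smul[of "sc_mat a" c] by (simp add: sc_mat_scalar)
qed (auto simp: sc_mat_1 simp flip: sc_mat_add sc_mat_mult sc_mat_scalar intro: Falg.intros)

lemma sc_mat_in_Falg_iff: "sc_mat b \<in> Falg \<longleftrightarrow> b \<in> F_kxy"
  using Falg_sc_mat sc_mat_F_kxy sc_mat_inject by metis

lemma central_in_F_sc_mat_iff: "central_in_F (sc_mat a) \<longleftrightarrow> central_kxy a"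
  unfolding central_in_F_def central_kxy_def sc_mat_in_Falg_iff
  by (metis Falg_sc_mat sc_mat_F_kxy sc_mat_inject sc_mat_mult)

lemma strongly_central_sc_mat_iff:
  "strongly_central (sc_mat a) \<longleftrightarrow> central_kxy a \<and> (\<forall>b\<in>F_kxy. central_kxy (a * b))"
  unfolding strongly_central_def central_in_F_sc_mat_iff
  by (metis Falg_sc_mat sc_mat_F_kxy central_in_F_sc_mat_iff sc_mat_mult)

lemma sc_mat_lcomm_kxy: "sc_mat (lcomm_kxy js) = lcomm js"
proof -
  have fold: "foldl (\<lambda>acc j. mcomm acc (Cgen j)) (sc_mat a) js
      = sc_mat (foldl (\<lambda>acc j. acc * Cgen_kxy j - Cgen_kxy j * acc) a js)" for a
    by (induction js arbitrary: a) (simp_all add: mcomm_def sc_mat_Cgen[symmetric] sc_mat_mult sc_mat_diff)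
  have init: "mcomm C1 C2 = sc_mat (Cgen_kxy 1 * Cgen_kxy 2 - Cgen_kxy 2 * Cgen_kxy 1)"
    by (simp add: mcomm_def sc_mat_Cgen Cgen_def flip: sc_mat_mult sc_mat_diff)
  show ?thesis
    unfolding lcomm_def lcomm_kxy_def init fold ..
qed

lemma sc_mat_fcomb_kxy: "sc_mat (fcomb_kxy r alpha js) = fcomb r alpha js"
  by (induction r) (simp_all add: sc_mat_0 sc_mat_lcomm_kxy sc_mat_add[symmetric] sc_mat_scalar[symmetric])

section \<open>Left normed commutators of \<open>C\<^sub>1\<close> and \<open>C\<^sub>2\<close>\<close>

definition dgen :: "nat \<Rightarrow> 'k::field kx" where
  "dgen j = xgen j - xgen' j"

definition s12 :: "'k::field kxy" where
  "s12 = ygen 0 * ygen 3 + ygen 2 * ygen 1"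

definition a12 :: "'k::field kxy" where
  "a12 = of_kx (dgen 1) * ygen 1 - of_kx (dgen 2) * ygen 0"

definition b12 :: "'k::field kxy" where
  "b12 = of_kx (dgen 2) * ygen 2 - of_kx (dgen 1) * ygen 3"

lemma commutator_Cgen_1_2: "Cgen_kxy 1 * Cgen_kxy 2 - Cgen_kxy 2 * Cgen_kxy 1 = M2 s12 a12 b12 s12"
  by (simp add: Cgen_kxy_def xgen_def xgen'_def yup_def ylow_def s12_def a12_def b12_def dgen_def
      of_kx_diff kxy_normalize) (simp add: mult.commute)

lemma y_comm_s12: "y_comm s12"
  unfolding s12_def by (intro y_comm_add y_comm_mult_y_anticomm y_anticomm_ygen)

lemma y_anticomm_a12: "y_anticomm a12"
  unfolding a12_def by (intro y_anticomm_diff y_anticomm_of_kx_mult y_anticomm_ygen)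

lemma y_anticomm_b12: "y_anticomm b12"
  unfolding b12_def by (intro y_anticomm_diff y_anticomm_of_kx_mult y_anticomm_ygen)

lemma a12_ylinear: "a12 \<in> ylinear"
  unfolding a12_def by (intro ylinear.diff ylinear.of_kx_mult_ygen)

lemma b12_ylinear: "b12 \<in> ylinear"
  unfolding b12_def by (intro ylinear.diff ylinear.of_kx_mult_ygen)

lemma commutator_with_Cgen_shape:
  assumes "y_comm z" "y_anticomm a" "y_anticomm b"
  shows "M2 z a b z * M2 (of_kx x) (ygen i) (ygen i') (of_kx x')
      - M2 (of_kx x) (ygen i) (ygen i') (of_kx x') * M2 z a b z
    = M2 (a * ygen i' + b * ygen i) (of_kx (x' - x) * a) (of_kx (x - x') * b) (a * ygen i' + b * ygen i)"
proof -
  have "z * ygen k = ygen k * z" "ygen k * a = - (a * ygen k)" "ygen k * b = - (b * ygen k)" for k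
    using assms by (simp_all add: y_comm_def y_anticomm_def)
  then show ?thesis
    by (simp add: of_kx_commute[of _ z] of_kx_commute[of _ a] of_kx_commute[of _ b] of_kx_diff algebra_simps)
qed

definition lcomm_weight :: "nat list \<Rightarrow> 'k::field kx" where
  "lcomm_weight xs = dgen 1 ^ count_list xs 1 * dgen 2 ^ count_list xs 2"

definition lcomm_up :: "nat list \<Rightarrow> 'k::field kxy" where
  "lcomm_up xs = of_kx ((-1) ^ length xs * lcomm_weight xs) * a12"

definition lcomm_low :: "nat list \<Rightarrow> 'k::field kxy" where
  "lcomm_low xs = of_kx (lcomm_weight xs) * b12"

definition lcomm_diag :: "nat list \<Rightarrow> 'k::field kxy" where
  "lcomm_diag xs = (if xs = [] then s12
     else lcomm_up (butlast xs) * ylow (last xs) + lcomm_low (butlast xs) * yup (last xs))"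

lemma lcomm_weight_snoc: "j \<in> {1, 2} \<Longrightarrow> lcomm_weight (xs @ [j]) = dgen j * lcomm_weight xs"
  by (auto simp: lcomm_weight_def)

lemma y_anticomm_lcomm_up: "y_anticomm (lcomm_up xs)"
  unfolding lcomm_up_def by (intro y_anticomm_of_kx_mult y_anticomm_a12)

lemma y_anticomm_lcomm_low: "y_anticomm (lcomm_low xs)"
  unfolding lcomm_low_def by (intro y_anticomm_of_kx_mult y_anticomm_b12)

lemma y_comm_lcomm_diag: "y_comm (lcomm_diag xs)"
  unfolding lcomm_diag_def yup_def ylow_def
  by (auto intro!: y_comm_s12 y_comm_add y_comm_mult_y_anticomm y_anticomm_lcomm_up
      y_anticomm_lcomm_low y_anticomm_ygen)

lemma lcomm_kxy_shape:
  "set xs \<subseteq> {1, 2} \<Longrightarrow>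
    (lcomm_kxy xs :: 'k::field kxy mat2) = M2 (lcomm_diag xs) (lcomm_up xs) (lcomm_low xs) (lcomm_diag xs)"
proof (induction xs rule: rev_induct)
  case Nil
  show ?case
    unfolding lcomm_kxy_def foldl_Nil commutator_Cgen_1_2
    by (simp add: lcomm_diag_def lcomm_up_def lcomm_low_def lcomm_weight_def of_kx_1)
next
  case (snoc j xs)
  have j: "j \<in> {1, 2}"
    using snoc.prems by simp
  have IH: "(lcomm_kxy xs :: 'k kxy mat2) = M2 (lcomm_diag xs) (lcomm_up xs) (lcomm_low xs) (lcomm_diag xs)"
    using snoc by simp
  have "(lcomm_kxy (xs @ [j]) :: 'k kxy mat2) = lcomm_kxy xs * Cgen_kxy j - Cgen_kxy j * lcomm_kxy xs"
    by (simp add: lcomm_kxy_def)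
  also have "\<dots> = M2 (lcomm_up xs * ylow j + lcomm_low xs * yup j)
      (of_kx (xgen' j - xgen j) * lcomm_up xs) (of_kx (xgen j - xgen' j) * lcomm_low xs)
      (lcomm_up xs * ylow j + lcomm_low xs * yup j)"
    unfolding IH Cgen_kxy_def yup_def ylow_def
    by (rule commutator_with_Cgen_shape) (simp_all add: y_comm_lcomm_diag y_anticomm_lcomm_up y_anticomm_lcomm_low)
  also have "\<dots> = M2 (lcomm_diag (xs @ [j])) (lcomm_up (xs @ [j])) (lcomm_low (xs @ [j])) (lcomm_diag (xs @ [j]))"
    using j by (simp add: lcomm_diag_def lcomm_up_def lcomm_low_def lcomm_weight_snoc dgen_def of_kx_mult_left algebra_simps)
  finally show ?case .
qed

lemma length_eq_count_list_1_2: "set xs \<subseteq> {1, 2} \<Longrightarrow> length xs = count_list xs 1 + count_list xs (2::nat)"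
  using sum_count_set[of xs "{1, 2}"] by simp

lemma lcomm_up_low_eq_if_counts_eq:
  assumes "set xs \<subseteq> {1, 2}" "set ys \<subseteq> {1, 2}"
    and "count_list xs 1 = count_list ys 1" "count_list xs 2 = count_list ys 2"
  shows "lcomm_up xs = lcomm_up ys" "lcomm_low xs = lcomm_low ys"
  using assms length_eq_count_list_1_2[of xs] length_eq_count_list_1_2[of ys]
  by (simp_all add: lcomm_up_def lcomm_low_def lcomm_weight_def)

text \<open>For such \<open>w\<close> the scalar matrix \<open>w\<close> commutes with \<open>F\<close> and annihilates
  \<open>[C\<^sub>1, C\<^sub>2] = (s12, a12; b12, s12)\<close>, hence every commutator of \<open>F\<close>.\<close>
definition annihilator :: "'k::field kxy \<Rightarrow> bool" where
  "annihilator w \<longleftrightarrow> y_comm w \<and> w * s12 = 0 \<and> w * a12 = 0 \<and> w * b12 = 0"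

lemma annihilator_0: "annihilator 0"
  by (simp add: annihilator_def y_comm_0)

lemma annihilator_add: "annihilator a \<Longrightarrow> annihilator b \<Longrightarrow> annihilator (a + b)"
  by (simp add: annihilator_def y_comm_add algebra_simps)

lemma annihilator_uminus: "annihilator a \<Longrightarrow> annihilator (- a)"
  by (simp add: annihilator_def y_comm_uminus)

lemma annihilator_of_kx_mult: "annihilator a \<Longrightarrow> annihilator (of_kx c * a)"
  by (simp add: annihilator_def y_comm_of_kx_mult mult.assoc)

lemma annihilator_a12_mult_b12: "annihilator (a12 * b12)"
  unfolding annihilator_def
proof (intro conjI)
  show "y_comm (a12 * b12)"
    by (rule y_comm_mult_y_anticomm[OF y_anticomm_a12 y_anticomm_b12])
  show "a12 * b12 * s12 = 0"
    unfolding a12_def b12_def s12_def by (simp add: kxy_normalize) (simp add: mult.commute)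
  have "a12 * b12 * a12 = a12 * (b12 * a12)"
    by (simp only: mult.assoc)
  also have "\<dots> = - (a12 * a12 * b12)"
    by (simp add: ylinear_anticommute[OF b12_ylinear a12_ylinear] mult.assoc)
  also have "\<dots> = 0"
    by (simp add: ylinear_square[OF a12_ylinear])
  finally show "a12 * b12 * a12 = 0" .
  show "a12 * b12 * b12 = 0"
    by (simp add: mult.assoc ylinear_square[OF b12_ylinear])
qed

text \<open>Expand \<open>a12 * b12\<close> along the generators in \<open>b12\<close>, and \<open>a12 * b12 = - (b12 * a12)\<close>
  along those in \<open>a12\<close>.\<close>
lemma lcomm_diag_snoc_diff_identity:
  "of_kx (e * (Q * dgen 2)) * a12 * ygen 2 + of_kx (Q * dgen 2) * b12 * ygen 0
     - (of_kx (e * (Q * dgen 1)) * a12 * ygen 3 + of_kx (Q * dgen 1) * b12 * ygen 1)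
   = of_kx (e * Q + Q) * (a12 * b12)"
proof -
  have ab: "a12 * b12 = of_kx (dgen 2) * (a12 * ygen 2) - of_kx (dgen 1) * (a12 * ygen 3)"
    unfolding b12_def by (simp add: right_diff_distrib mult.assoc[symmetric] of_kx_commute[of _ a12])
  have ba: "b12 * a12 = of_kx (dgen 1) * (b12 * ygen 1) - of_kx (dgen 2) * (b12 * ygen 0)"
    unfolding a12_def by (simp add: right_diff_distrib mult.assoc[symmetric] of_kx_commute[of _ b12])
  have "of_kx (e * Q + Q) * (a12 * b12) = of_kx (e * Q) * (a12 * b12) - of_kx Q * (b12 * a12)"
    by (simp add: of_kx_add ring_distribs ylinear_anticommute[OF b12_ylinear a12_ylinear])
  also have "\<dots> = of_kx (e * (Q * dgen 2)) * a12 * ygen 2 + of_kx (Q * dgen 2) * b12 * ygen 0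
     - (of_kx (e * (Q * dgen 1)) * a12 * ygen 3 + of_kx (Q * dgen 1) * b12 * ygen 1)"
    unfolding ab ba by (simp add: algebra_simps of_kx_mult_left)
  finally show ?thesis ..
qed

lemma annihilator_lcomm_diag_snoc_diff:
  assumes "set xs \<subseteq> {1, 2}" "set ys \<subseteq> {1, 2}"
    and "count_list (xs @ [1]) 1 = count_list (ys @ [2]) 1"
    and "count_list (xs @ [1]) 2 = count_list (ys @ [2]) 2"
  shows "annihilator (lcomm_diag (xs @ [1]) - lcomm_diag (ys @ [2]) :: 'k::field kxy)"
proof -
  define Q :: "'k kx" where "Q = dgen 1 ^ count_list xs 1 * dgen 2 ^ count_list ys 2"
  define e :: "'k kx" where "e = (-1) ^ length xs"
  have counts: "count_list xs 2 = Suc (count_list ys 2)" "count_list ys 1 = Suc (count_list xs 1)"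
    using assms(3,4) by simp_all
  then have "length ys = length xs"
    using length_eq_count_list_1_2[OF assms(1)] length_eq_count_list_1_2[OF assms(2)] by simp
  moreover have "lcomm_weight xs = Q * dgen 2" "lcomm_weight ys = Q * dgen 1"
    unfolding lcomm_weight_def Q_def counts by (simp_all add: mult_ac)
  ultimately have "lcomm_diag (xs @ [1]) - lcomm_diag (ys @ [2])
      = of_kx (e * (Q * dgen 2)) * a12 * ygen 2 + of_kx (Q * dgen 2) * b12 * ygen 0
        - (of_kx (e * (Q * dgen 1)) * a12 * ygen 3 + of_kx (Q * dgen 1) * b12 * ygen 1)"
    by (simp add: lcomm_diag_def lcomm_up_def lcomm_low_def yup_def ylow_def e_def)
  also have "\<dots> = of_kx (e * Q + Q) * (a12 * b12)"
    by (rule lcomm_diag_snoc_diff_identity)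
  finally show ?thesis
    by (simp add: annihilator_of_kx_mult annihilator_a12_mult_b12)
qed

lemma annihilator_lcomm_diag_diff:
  assumes "set xs \<subseteq> {1, 2}" "set ys \<subseteq> {1, 2}"
    and "count_list xs 1 = count_list ys 1" "count_list xs 2 = count_list ys 2"
  shows "annihilator (lcomm_diag xs - lcomm_diag ys :: 'k::field kxy)"
proof (cases "xs = []")
  case True
  then have "ys = []"
    using assms length_eq_count_list_1_2[of xs] length_eq_count_list_1_2[of ys] by auto
  with True show ?thesis by (simp add: annihilator_0)
next
  case False
  then have "ys \<noteq> []"
    using assms length_eq_count_list_1_2[of xs] length_eq_count_list_1_2[of ys] by auto
  then obtain xs' ys' j k where xs: "xs = xs' @ [j]" and ys: "ys = ys' @ [k]"
    using \<open>xs \<noteq> []\<close> by (metis rev_exhaust)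
  with assms have jk: "j \<in> {1, 2}" "k \<in> {1, 2}" and sets: "set xs' \<subseteq> {1, 2}" "set ys' \<subseteq> {1, 2}"
    by auto
  consider "j = k" | "j = 1" "k = 2" | "j = 2" "k = 1"
    using jk by auto
  then show ?thesis
  proof cases
    case 1
    with assms xs ys have "lcomm_up xs' = (lcomm_up ys' :: 'k kxy)" "lcomm_low xs' = (lcomm_low ys' :: 'k kxy)"
      by (simp_all add: lcomm_up_low_eq_if_counts_eq[OF sets])
    with 1 xs ys show ?thesis
      by (simp add: lcomm_diag_def annihilator_0)
  next
    case 2
    with assms xs ys show ?thesis
      using annihilator_lcomm_diag_snoc_diff[OF sets] by simp
  next
    case 3
    with assms xs ys have "annihilator (lcomm_diag (ys' @ [1]) - lcomm_diag (xs' @ [2]) :: 'k kxy)"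
      using annihilator_lcomm_diag_snoc_diff[OF sets(2,1)] by simp
    with 3 xs ys show ?thesis
      using annihilator_uminus by fastforce
  qed
qed

lemma lcomm_kxy_eq_add_scalar:
  assumes "set xs \<subseteq> {1, 2}" "set ys \<subseteq> {1, 2}"
    and "count_list xs 1 = count_list ys 1" "count_list xs 2 = count_list ys 2"
  shows "(lcomm_kxy xs :: 'k::field kxy mat2) = lcomm_kxy ys + scalar_mat2 (lcomm_diag xs - lcomm_diag ys)"
proof -
  have "(lcomm_kxy xs :: 'k kxy mat2) = M2 (lcomm_diag xs) (lcomm_up xs) (lcomm_low xs) (lcomm_diag xs)"
    "(lcomm_kxy ys :: 'k kxy mat2) = M2 (lcomm_diag ys) (lcomm_up ys) (lcomm_low ys) (lcomm_diag ys)"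
    by (rule lcomm_kxy_shape[OF assms(1)], rule lcomm_kxy_shape[OF assms(2)])
  moreover have "(lcomm_up xs :: 'k kxy) = lcomm_up ys" "(lcomm_low xs :: 'k kxy) = lcomm_low ys"
    using lcomm_up_low_eq_if_counts_eq[OF assms] by simp_all
  ultimately show ?thesis
    by (simp add: scalar_mat2_def)
qed

lemma fcomb_kxy_decomposition:
  fixes alpha :: "nat \<Rightarrow> 'k::field kx"
  assumes "set ws \<subseteq> {1, 2}"
    and "\<forall>j<r. set (js j) \<subseteq> {1, 2} \<and> count_list (js j) 1 = count_list ws 1
                \<and> count_list (js j) 2 = count_list ws 2"
  shows "\<exists>D. annihilator D \<and>
    fcomb_kxy r alpha js = scalar_mat2 (of_kx (\<Sum>j<r. alpha j)) * lcomm_kxy ws + scalar_mat2 D"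
  using assms(2)
proof (induction r)
  case 0
  show ?case
    by (rule exI[of _ 0]) (simp add: annihilator_0 of_kx_0 scalar_mat2_0)
next
  case (Suc r)
  then obtain D where D: "annihilator D"
    and fcomb: "fcomb_kxy r alpha js = scalar_mat2 (of_kx (\<Sum>j<r. alpha j)) * lcomm_kxy ws + scalar_mat2 D"
    by auto
  define w :: "'k kxy" where "w = lcomm_diag (js r) - lcomm_diag ws"
  have r: "set (js r) \<subseteq> {1, 2}" "count_list (js r) 1 = count_list ws 1" "count_list (js r) 2 = count_list ws 2"
    using Suc.prems by auto
  have "annihilator w"
    unfolding w_def using annihilator_lcomm_diag_diff[OF r(1) assms(1) r(2,3)] .
  moreover have "lcomm_kxy (js r) = lcomm_kxy ws + scalar_mat2 w"
    unfolding w_def by (rule lcomm_kxy_eq_add_scalar[OF r(1) assms(1) r(2,3)])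
  ultimately show ?case
    using annihilator_add[OF D annihilator_of_kx_mult] fcomb
    by (intro exI[of _ "D + of_kx (alpha r) * w"])
       (simp add: of_kx_add scalar_mat2_add scalar_mat2_mult algebra_simps)
qed

section \<open>Central elements of \<open>F\<close>\<close>

lemma y_comm_scalar_mat2_commute_F:
  assumes "y_comm w" and "M \<in> F_kxy"
  shows "scalar_mat2 w * M = M * scalar_mat2 w"
  using assms(2)
proof (induction rule: F_kxy.induct)
  case one
  show ?case by simp
next
  case (gen j)
  show ?case
    using assms(1) by (auto simp: Cgen_kxy_def yup_def ylow_def y_comm_def of_kx_commute
        intro!: scalar_mat2_commute)
next
  case (add a b)
  then show ?case by (simp add: algebra_simps)
next
  case (mult a b)
  then show ?case by (metis mult.assoc)
next
  case (smult a c)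
  define S where "S = scalar_mat2 (of_kx (constK c))"
  have "scalar_mat2 w * (S * a) = (scalar_mat2 w * S) * a"
    by (simp only: mult.assoc)
  also have "\<dots> = S * (scalar_mat2 w * a)"
    unfolding S_def by (simp only: scalar_mat2_of_kx_commute mult.assoc)
  also have "\<dots> = S * a * scalar_mat2 w"
    using smult.IH by (simp only: mult.assoc)
  finally show ?case
    unfolding S_def .
qed

lemma annihilated_commutator_mult:
  fixes z a b c :: "'a::ring"
  assumes "z * a = a * z" "z * (a * c - c * a) = 0" "z * (b * c - c * b) = 0"
  shows "z * (a * b * c - c * (a * b)) = 0"
proof -
  have "z * (a * b * c - c * (a * b)) = (z * a) * (b * c - c * b) + z * (a * c - c * a) * b"
    by (simp add: algebra_simps)
  also have "\<dots> = 0"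
    using assms by (simp add: mult.assoc)
  finally show ?thesis .
qed

text \<open>\<open>b \<mapsto> b * c - c * b\<close> is a derivation, so it suffices to check the generators.\<close>
lemma annihilated_commutator_F:
  assumes comm: "\<forall>M\<in>F_kxy. z * M = M * z"
    and gens: "\<forall>j\<in>{1, 2}. z * (Cgen_kxy j * c - c * Cgen_kxy j) = 0"
    and "b \<in> F_kxy"
  shows "z * (b * c - c * b) = 0"
  using assms(3)
proof (induction rule: F_kxy.induct)
  case one
  show ?case by simp
next
  case (gen j)
  then show ?case using gens by blast
next
  case (add a b)
  then show ?case by (simp add: algebra_simps)
next
  case (mult a b)
  then show ?case using comm annihilated_commutator_mult by blast
next
  case (smult a k)
  define S where "S = scalar_mat2 (of_kx (constK k))"
  have "S \<in> F_kxy"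
    using F_kxy.smult[OF F_kxy.one] by (simp add: S_def)
  with comm have "z * S = S * z"
    by blast
  moreover have "c * S = S * c"
    unfolding S_def by (rule scalar_mat2_of_kx_commute[symmetric])
  ultimately have "c * (S * a) = S * (c * a)" "z * (S * (a * c - c * a)) = S * (z * (a * c - c * a))"
    by (simp_all add: mult.assoc[symmetric])
  then have "z * (S * a * c - c * (S * a)) = S * (z * (a * c - c * a))"
    by (simp add: algebra_simps)
  with smult.IH show ?case
    by (simp add: S_def)
qed

lemma annihilator_commutator_Cgen:
  assumes "annihilator D" "j \<in> {1, 2}" "k \<in> {1, 2}"
  shows "scalar_mat2 D * (Cgen_kxy j * Cgen_kxy k - Cgen_kxy k * Cgen_kxy j) = 0"
proof -
  have "scalar_mat2 D * (Cgen_kxy 1 * Cgen_kxy 2 - Cgen_kxy 2 * Cgen_kxy 1) = 0"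
    using assms(1) unfolding commutator_Cgen_1_2 by (simp add: scalar_mat2_def annihilator_def zero_mat2_def)
  then show ?thesis
    using assms(2,3) by (auto simp: algebra_simps)
qed

lemma annihilator_commutator_F:
  assumes D: "annihilator D" and "b \<in> F_kxy" "c \<in> F_kxy"
  shows "scalar_mat2 D * (b * c - c * b) = 0"
proof -
  have comm: "\<forall>M\<in>F_kxy. scalar_mat2 D * M = M * scalar_mat2 D"
    using D y_comm_scalar_mat2_commute_F by (auto simp: annihilator_def)
  have C: "scalar_mat2 D * (a * Cgen_kxy k - Cgen_kxy k * a) = 0" if "a \<in> F_kxy" "k \<in> {1, 2}" for a k
    by (rule annihilated_commutator_F[OF comm _ that(1)])
       (use annihilator_commutator_Cgen[OF D _ that(2)] in blast)
  have "\<forall>j\<in>{1, 2}. scalar_mat2 D * (Cgen_kxy j * c - c * Cgen_kxy j) = 0"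
  proof
    fix j :: nat assume "j \<in> {1, 2}"
    have "scalar_mat2 D * (Cgen_kxy j * c - c * Cgen_kxy j)
        = - (scalar_mat2 D * (c * Cgen_kxy j - Cgen_kxy j * c))"
      by (simp add: algebra_simps)
    then show "scalar_mat2 D * (Cgen_kxy j * c - c * Cgen_kxy j) = 0"
      using C[OF assms(3) \<open>j \<in> {1, 2}\<close>] by simp
  qed
  then show ?thesis
    by (rule annihilated_commutator_F[OF comm _ assms(2)])
qed

lemma annihilator_strongly_central:
  assumes D: "annihilator D" and F: "scalar_mat2 D \<in> F_kxy"
  shows "central_kxy (scalar_mat2 D) \<and> (\<forall>b\<in>F_kxy. central_kxy (scalar_mat2 D * b))"
proof -
  have comm: "scalar_mat2 D * c = c * scalar_mat2 D" if "c \<in> F_kxy" for c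
    using D that y_comm_scalar_mat2_commute_F by (auto simp: annihilator_def)
  have "scalar_mat2 D * b * c = c * (scalar_mat2 D * b)" if "b \<in> F_kxy" "c \<in> F_kxy" for b c
  proof -
    have "c * (scalar_mat2 D * b) = scalar_mat2 D * (c * b)"
      using comm[OF that(2)] by (simp add: mult.assoc[symmetric])
    then have "scalar_mat2 D * b * c - c * (scalar_mat2 D * b) = scalar_mat2 D * (b * c - c * b)"
      by (simp add: algebra_simps)
    then show ?thesis
      using annihilator_commutator_F[OF D that] by simp
  qed
  then show ?thesis
    using F comm by (auto simp: central_kxy_def intro: F_kxy.mult)
qed

lemma dgen_nonzero: "dgen j \<noteq> (0::'k::field kx)"
proof
  assume "dgen j = (0::'k kx)"
  moreover have "coeff (dgen 1 :: 'k kx) 1 = 1" "coeff (coeff (dgen 2 :: 'k kx) 0) 1 = 1"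
    by (simp_all add: dgen_def xgen_def xgen'_def vx1_def vx1'_def vx2_def vx2'_def coeff_monom)
  ultimately show False
    by (cases "j = 1") (auto simp: dgen_def xgen_def xgen'_def)
qed

lemma lcomm_weight_nonzero: "lcomm_weight xs \<noteq> (0::'k::field kx)"
  by (simp add: lcomm_weight_def dgen_nonzero)

lemma of_kx_mult_a12_eq_0:
  assumes "of_kx c * a12 = (0::'k::field kxy)"
  shows "c = 0"
proof -
  have "of_kx c * a12 = of_kx (c * dgen 1) * ygen 1 - of_kx (c * dgen 2) * (ygen 0 :: 'k kxy)"
    by (simp add: a12_def algebra_simps of_kx_mult_left)
  then have "Rep_kxy (of_kx c * a12 :: 'k kxy) {1} = c * dgen 1"
    by (simp add: minus_kxy.rep_eq gsub_def Rep_of_kx_mult_ygen)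
  with assms have "c * dgen 1 = 0"
    by (simp add: zero_kxy.rep_eq gzero_def)
  then show "c = 0"
    by (simp add: dgen_nonzero)
qed

lemma central_kxy_imp_coeff_0:
  fixes \<beta> :: "'k::field kx"
  assumes ws: "set ws \<subseteq> {1, 2}" and D: "annihilator D"
    and central: "central_kxy (scalar_mat2 (of_kx \<beta>) * lcomm_kxy ws + scalar_mat2 D)"
  shows "\<beta> = 0"
proof -
  define B where "B = scalar_mat2 (of_kx \<beta>)"
  define u :: "'k kxy mat2" where "u = lcomm_kxy ws"
  define C :: "'k kxy mat2" where "C = Cgen_kxy 1"
  have "C \<in> F_kxy" unfolding C_def by (simp add: F_kxy.gen)
  then have "(B * u + scalar_mat2 D) * C = C * (B * u + scalar_mat2 D)"
    using central by (simp add: central_kxy_def B_def u_def)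
  moreover have "scalar_mat2 D * C = C * scalar_mat2 D"
    using D \<open>C \<in> F_kxy\<close> by (simp add: annihilator_def y_comm_scalar_mat2_commute_F)
  moreover have "C * (B * u) = B * (C * u)"
    unfolding B_def by (metis mult.assoc scalar_mat2_of_kx_commute)
  ultimately have "B * (u * C - C * u) = 0"
    by (simp add: algebra_simps)
  moreover have "u * C - C * u = lcomm_kxy (ws @ [1])"
    by (simp add: u_def C_def lcomm_kxy_def)
  moreover have "(lcomm_kxy (ws @ [1]) :: 'k kxy mat2) = M2 (lcomm_diag (ws @ [1])) (lcomm_up (ws @ [1]))
      (lcomm_low (ws @ [1])) (lcomm_diag (ws @ [1]))"
    using ws by (intro lcomm_kxy_shape) simp
  ultimately have "of_kx \<beta> * lcomm_up (ws @ [1]) = 0"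
    by (simp add: B_def scalar_mat2_def zero_mat2_def)
  then have "\<beta> * ((-1) ^ length (ws @ [1]) * lcomm_weight (ws @ [1])) = 0"
    by (intro of_kx_mult_a12_eq_0) (simp add: lcomm_up_def of_kx_mult_left)
  then show "\<beta> = 0"
    by (simp add: lcomm_weight_nonzero)
qed

theorem proposition3:
  fixes n m r :: nat and js :: "nat \<Rightarrow> nat list" and alpha :: "nat \<Rightarrow> 'k::field kx"
  assumes "infinite (UNIV :: 'k set)"
    and "(2::'k) \<noteq> 0"
    and "n \<ge> 1" and "m \<ge> 1"
    and "\<forall>j<r. set (js j) \<subseteq> {1, 2} \<and> 1 + count_list (js j) 1 = n
                \<and> 1 + count_list (js j) 2 = m"
    and "fcomb r alpha js \<in> Falg"
  shows "(strongly_central (fcomb r alpha js) \<longleftrightarrow> central_in_F (fcomb r alpha js))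
       \<and> (central_in_F (fcomb r alpha js) \<longleftrightarrow> (\<Sum>j<r. alpha j) = 0)"
proof -
  define ws where "ws = replicate (n - 1) (1::nat) @ replicate (m - 1) 2"
  define f :: "'k kxy mat2" where "f = fcomb_kxy r alpha js"
  have ws: "set ws \<subseteq> {1, 2}" "count_list ws 1 = n - 1" "count_list ws 2 = m - 1"
    by (auto simp: ws_def count_list_eq_length_filter filter_replicate)
  then obtain D where D: "annihilator D"
    and f_eq: "f = scalar_mat2 (of_kx (\<Sum>j<r. alpha j)) * lcomm_kxy ws + scalar_mat2 D"
    using fcomb_kxy_decomposition[OF ws(1), of r js alpha] assms(5) unfolding f_def by force
  have fcomb: "fcomb r alpha js = sc_mat f"
    by (simp add: f_def sc_mat_fcomb_kxy)
  with assms(6) have "f \<in> F_kxy"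
    by (simp add: sc_mat_in_Falg_iff)
  have "strongly_central (fcomb r alpha js)" if "(\<Sum>j<r. alpha j) = 0"
    using annihilator_strongly_central[OF D] \<open>f \<in> F_kxy\<close> f_eq that
    by (simp add: fcomb strongly_central_sc_mat_iff of_kx_0 scalar_mat2_0)
  moreover have "(\<Sum>j<r. alpha j) = 0" if "central_in_F (fcomb r alpha js)"
    using central_kxy_imp_coeff_0[OF ws(1) D] that f_eq by (simp add: fcomb central_in_F_sc_mat_iff)
  ultimately show ?thesis
    unfolding strongly_central_def by blast
qed

end
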